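(* Let $H$ be a real Hilbert space, let $D\subseteq H$ be a nonempty closed convex set, let $I$ be a countable set of positive integers, and let $(T_i)_{i\in I}$ be firmly nonexpansive operators $T_i:D\to D$ with $F:=\bigcap_{i\in I}\mathrm{Fix}(T_i)\neq\emptyset$. Let $(\Omega,w)\in\mathcal{M}_\infty$, let $(\lambda_k)_{k\in\mathbb{N}}$ be a steering sequence, and let $u,x^0\in D$. Then the sequence defined by $$x^{k+1}=\lambda_k u+(1-\lambda_k)\sum_{t\in\Omega}w(t)T[t](x^k),\quad k\ge0,$$ is well defined and converges strongly to $P_F(u)$.
   Context: An operator $T:D\to H$ is firmly nonexpansive if $\|T(x)-T(y)\|^2\le\langle x-y,T(x)-T(y)\rangle$ for all $x,y\in D$. $\mathrm{Fix}(T)=\{x\in D:T(x)=x\}$; $P_F$ is the metric projection onto $F$. An index vector is a finite tuple $t=(t_1,\dots,t_q)$ with each $t_\ell\in I$; the string operator is $T[t]:=T_{t_q}T_{t_{q-1}}\cdots T_{t_1}$. A countable set $\Omega$ of index vectors is fit if every $i\in I$ appears as a component of some $t\in\Omega$. $\mathcal{M}_\infty$ denotes the collection of all pairs $(\Omega,w)$ where $\Omega$ is a fit countable set of index vectors and $w:\Omega\to(0,1)$ satisfies $\sum_{t\in\Omega}w(t)=1$. A steering sequence is a real sequence $(\lambda_k)_{k\in\mathbb{N}}$ with $\lambda_k\in[0,1]$ for all $k$, $\lim_{k\to\infty}\lambda_k=0$, $\sum_{k=0}^\infty\lambda_k=+\infty$, and $\sum_{k=0}^\infty|\lambda_{k+1}-\lambda_k|<\infty$.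 *)

theory Defs
  imports "HOL-Analysis.Analysis"
begin

definition firmly_nonexpansive_on :: "'a::real_inner set \<Rightarrow> ('a \<Rightarrow> 'a) \<Rightarrow> bool" where
  "firmly_nonexpansive_on D T \<longleftrightarrow>
     (\<forall>x\<in>D. \<forall>y\<in>D. (norm (T x - T y))\<^sup>2 \<le> inner (x - y) (T x - T y))"

definition Fix_on :: "'a set \<Rightarrow> ('a \<Rightarrow> 'a) \<Rightarrow> 'a set" where
  "Fix_on D T = {x\<in>D. T x = x}"

text \<open>Metric projection onto F (the unique nearest point, when it exists).\<close>
definition metric_proj :: "'a::real_normed_vector set \<Rightarrow> 'a \<Rightarrow> 'a" where
  "metric_proj F u = (THE p. p \<in> F \<and> (\<forall>y\<in>F. norm (u - p) \<le> norm (u - y)))"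

text \<open>String operator: for t = [t_1,...,t_q], string_op T t = T t_q o ... o T t_1.\<close>
definition string_op :: "(nat \<Rightarrow> 'a \<Rightarrow> 'a) \<Rightarrow> nat list \<Rightarrow> 'a \<Rightarrow> 'a" where
  "string_op T t = fold T t"

definition fit :: "nat set \<Rightarrow> nat list set \<Rightarrow> bool" where
  "fit I \<Omega> \<longleftrightarrow> countable \<Omega> \<and> (\<forall>t\<in>\<Omega>. t \<noteq> [] \<and> set t \<subseteq> I) \<and> (\<forall>i\<in>I. \<exists>t\<in>\<Omega>. i \<in> set t)"

definition M_infty :: "nat set \<Rightarrow> nat list set \<Rightarrow> (nat list \<Rightarrow> real) \<Rightarrow> bool" where
  "M_infty I \<Omega> w \<longleftrightarrow> fit I \<Omega> \<and> (\<forall>t\<in>\<Omega>. 0 < w t \<and> w t < 1) \<and> (w has_sum 1) \<Omega>"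

definition steering_seq :: "(nat \<Rightarrow> real) \<Rightarrow> bool" where
  "steering_seq lam \<longleftrightarrow> (\<forall>k. 0 \<le> lam k \<and> lam k \<le> 1) \<and> lam \<longlonglongrightarrow> 0
     \<and> \<not> summable lam \<and> summable (\<lambda>k. \<bar>lam (Suc k) - lam k\<bar>)"

end

theory Submission
  imports Defs
begin

text \<open>
  The averaged string operator \<open>S x = (\<Sum>t\<in>\<Omega>. w t *\<^sub>R T[t] x)\<close> is nonexpansive on \<open>D\<close>, and its
  fixed points are exactly the common fixed points of the \<open>T i\<close>: at a fixed point of \<open>S\<close> no
  string can decrease the distance to a common fixed point, which by firm nonexpansiveness
  forces every factor to fix the point. So the scheme is Halpern's iteration for \<open>S\<close> with
  anchor \<open>u\<close>. Browder's approximating curve, the fixed points \<open>z\<^sub>n\<close> of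
  \<open>u/(n+2) + (n+1)/(n+2) S\<close>, converges to the point \<open>p\<close> of \<open>Fix S\<close> satisfying
  \<open>\<langle>u - p, p - q\<rangle> \<ge> 0\<close> for all \<open>q \<in> Fix S\<close>, i.e. \<open>p = P\<^sub>F u\<close>. Monotonicity of \<open>I - S\<close> gives
  \<open>\<langle>u - z\<^sub>n, x\<^sub>k - z\<^sub>n\<rangle> \<le> (n+1) \<parallel>x\<^sub>k - S x\<^sub>k\<parallel> \<parallel>x\<^sub>k - z\<^sub>n\<parallel>\<close>, and the steering conditions give
  \<open>\<parallel>x\<^sub>k - S x\<^sub>k\<parallel> \<rightarrow> 0\<close>; together \<open>limsup \<langle>u - p, x\<^sub>k - p\<rangle> \<le> 0\<close>. Xu's lemma on recursive
  inequalities applied to \<open>\<parallel>x\<^sub>k\<^sub>+\<^sub>1 - p\<parallel>\<^sup>2 \<le> (1 - \<lambda>\<^sub>k) \<parallel>x\<^sub>k - p\<parallel>\<^sup>2 + 2 \<lambda>\<^sub>k \<langle>u - p, x\<^sub>k\<^sub>+\<^sub>1 - p\<rangle>\<close>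
  then yields \<open>x\<^sub>k \<rightarrow> p\<close>.
\<close>

section \<open>Recursive inequalities for real sequences\<close>

lemma prod_one_minus_LIMSEQ_zero:
  fixes \<gamma> :: "nat \<Rightarrow> real"
  assumes \<gamma>: "\<And>i. 0 \<le> \<gamma> i \<and> \<gamma> i \<le> 1" and divergent: "\<not> summable \<gamma>"
  shows "(\<lambda>m. \<Prod>i<m. 1 - \<gamma> i) \<longlonglongrightarrow> 0"
proof (rule tendsto_sandwich[of "\<lambda>_. 0" _ _ "\<lambda>m. exp (- (\<Sum>i<m. \<gamma> i))"])
  have "filterlim (\<lambda>m. \<Sum>i<m. \<gamma> i) at_top sequentially"
    unfolding filterlim_at_top
  proof
    fix Z
    obtain m0 where "Z \<le> (\<Sum>i<m0. \<gamma> i)"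
      using summableI_nonneg_bounded[of \<gamma> Z] \<gamma> divergent by (meson linorder_le_cases)
    moreover have "(\<Sum>i<m0. \<gamma> i) \<le> (\<Sum>i<m. \<gamma> i)" if "m0 \<le> m" for m
      using that \<gamma> by (intro sum_mono2) auto
    ultimately show "\<forall>\<^sub>F m in sequentially. Z \<le> (\<Sum>i<m. \<gamma> i)"
      unfolding eventually_sequentially by (meson order_trans)
  qed
  then show "(\<lambda>m. exp (- (\<Sum>i<m. \<gamma> i))) \<longlonglongrightarrow> 0"
    by (intro filterlim_compose[OF exp_at_bot]) (simp add: filterlim_uminus_at_bot)
  show "\<forall>\<^sub>F m in sequentially. (\<Prod>i<m. 1 - \<gamma> i) \<le> exp (- (\<Sum>i<m. \<gamma> i))"
  proof (rule always_eventually, rule allI)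
    fix m
    have "(\<Prod>i<m. 1 - \<gamma> i) \<le> (\<Prod>i<m. exp (- \<gamma> i))"
      using \<gamma> by (intro prod_mono) (auto simp: exp_ge_add_one_self[of "- \<gamma> _", simplified])
    then show "(\<Prod>i<m. 1 - \<gamma> i) \<le> exp (- (\<Sum>i<m. \<gamma> i))"
      by (simp add: exp_sum[symmetric] sum_negf)
  qed
  show "\<forall>\<^sub>F m in sequentially. 0 \<le> (\<Prod>i<m. 1 - \<gamma> i)"
    using \<gamma> by (intro always_eventually allI prod_nonneg) auto
qed simp_all

lemma recursive_ineq_LIMSEQ_zero:
  fixes a \<gamma> \<beta> b :: "nat \<Rightarrow> real"
  assumes a: "\<And>k. 0 \<le> a k" and \<gamma>: "\<And>k. 0 \<le> \<gamma> k \<and> \<gamma> k \<le> 1" and divergent: "\<not> summable \<gamma>"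
    and b: "\<And>k. 0 \<le> b k" "summable b"
    and \<beta>: "\<And>\<epsilon>. \<epsilon> > 0 \<Longrightarrow> \<forall>\<^sub>F k in sequentially. \<beta> k \<le> \<epsilon>"
    and rec: "\<And>k. a (Suc k) \<le> (1 - \<gamma> k) * a k + \<gamma> k * \<beta> k + b k"
  shows "a \<longlonglongrightarrow> 0"
proof (rule LIMSEQ_I)
  fix r :: real
  assume "0 < r"
  define \<epsilon> where "\<epsilon> = r / 3"
  have "\<epsilon> > 0" using \<open>0 < r\<close> by (simp add: \<epsilon>_def)
  obtain N1 where N1: "\<And>k. N1 \<le> k \<Longrightarrow> \<beta> k \<le> \<epsilon>"
    using \<beta>[OF \<open>\<epsilon> > 0\<close>] unfolding eventually_sequentially by blast
  obtain N2 where N2: "\<And>n. N2 \<le> n \<Longrightarrow> norm (\<Sum>i. b (i + n)) < \<epsilon>"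
    using suminf_exist_split[OF \<open>\<epsilon> > 0\<close> b(2)] by blast
  define N where "N = max N1 N2"
  define P where "P m = (\<Prod>i<m. 1 - \<gamma> (N + i))" for m
  have tail: "(\<Sum>i<m. b (N + i)) \<le> \<epsilon>" for m
  proof -
    have "(\<Sum>i<m. b (i + N)) \<le> (\<Sum>i. b (i + N))"
      using b by (intro sum_le_suminf) (auto simp: summable_iff_shift)
    also have "\<dots> < \<epsilon>" using N2[of N] by (simp add: N_def)
    finally show ?thesis by (simp add: add.commute)
  qed
  have bound: "a (N + m) \<le> \<epsilon> + P m * a N + (\<Sum>i<m. b (N + i))" for m
  proof (induction m)
    case 0
    show ?case using \<open>\<epsilon> > 0\<close> by (simp add: P_def)
  next
    case (Suc m)
    let ?g = "\<gamma> (N + m)" and ?B = "\<Sum>i<m. b (N + i)"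
    have "0 \<le> ?B" using b by (simp add: sum_nonneg)
    have "?g * \<beta> (N + m) \<le> ?g * \<epsilon>"
      using N1[of "N + m"] \<gamma> by (intro mult_left_mono) (auto simp: N_def)
    then have "a (N + Suc m) \<le> (1 - ?g) * a (N + m) + ?g * \<epsilon> + b (N + m)"
      using rec[of "N + m"] by simp
    also have "\<dots> \<le> (1 - ?g) * (\<epsilon> + P m * a N + ?B) + ?g * \<epsilon> + b (N + m)"
      using Suc.IH \<gamma>[of "N + m"] by (simp add: mult_left_mono)
    also have "\<dots> = \<epsilon> + P (Suc m) * a N + (1 - ?g) * ?B + b (N + m)"
      by (simp add: P_def algebra_simps)
    also have "\<dots> \<le> \<epsilon> + P (Suc m) * a N + ?B + b (N + m)"
      using \<gamma>[of "N + m"] \<open>0 \<le> ?B\<close> by (simp add: mult_left_le_one_le)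
    finally show ?case by simp
  qed
  have "\<not> summable (\<lambda>i. \<gamma> (i + N))"
    using divergent by (simp add: summable_iff_shift)
  then have "P \<longlonglongrightarrow> 0"
    unfolding P_def using prod_one_minus_LIMSEQ_zero[of "\<lambda>i. \<gamma> (N + i)"] \<gamma> by (simp add: add.commute)
  then have "(\<lambda>m. P m * a N) \<longlonglongrightarrow> 0"
    by (simp add: tendsto_mult_left_zero)
  from order_tendstoD(2)[OF this \<open>\<epsilon> > 0\<close>]
  obtain m0 where m0: "\<And>m. m0 \<le> m \<Longrightarrow> P m * a N < \<epsilon>"
    unfolding eventually_sequentially by blast
  show "\<exists>n0. \<forall>n\<ge>n0. norm (a n - 0) < r"
  proof (intro exI allI impI)
    fix n
    assume "N + m0 \<le> n"
    then have "a n \<le> \<epsilon> + P (n - N) * a N + (\<Sum>i<n - N. b (N + i))"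
      using bound[of "n - N"] by simp
    also have "\<dots> < 3 * \<epsilon>"
      using m0[of "n - N"] tail[of "n - N"] \<open>N + m0 \<le> n\<close> by fastforce
    finally show "norm (a n - 0) < r" using a[of n] by (simp add: \<epsilon>_def)
  qed
qed

section \<open>Nonexpansive maps and Browder's approximating curve\<close>

lemma power2_norm_add:
  fixes a b :: "'a::real_inner"
  shows "(norm (a + b))\<^sup>2 = (norm a)\<^sup>2 + 2 * inner a b + (norm b)\<^sup>2"
  by (simp add: power2_norm_eq_inner inner_add_left inner_add_right inner_commute)

lemma lipschitz_on_1_norm_le:
  "1-lipschitz_on D S \<Longrightarrow> x \<in> D \<Longrightarrow> y \<in> D \<Longrightarrow> norm (S x - S y) \<le> norm (x - y)"
  by (auto dest: lipschitz_onD simp: dist_norm)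

lemma nonexpansive_imp_monotone:
  fixes S :: "'a::real_inner \<Rightarrow> 'a"
  assumes "norm (S x - S y) \<le> norm (x - y)"
  shows "0 \<le> inner ((x - S x) - (y - S y)) (x - y)"
proof -
  have "inner (S x - S y) (x - y) \<le> norm (S x - S y) * norm (x - y)"
    by (rule norm_cauchy_schwarz)
  also have "\<dots> \<le> inner (x - y) (x - y)"
    using assms by (simp add: mult_right_mono dot_square_norm power2_eq_square)
  finally show ?thesis by (simp add: algebra_simps inner_diff_left inner_diff_right)
qed

lemma anchored_fixed_point_exists:
  fixes D :: "'a::{real_normed_vector,complete_space} set"
  assumes "closed D" "convex D" "S ` D \<subseteq> D" "1-lipschitz_on D S" "u \<in> D" "0 \<le> c" "c < 1"
  shows "\<exists>z\<in>D. (1 - c) *\<^sub>R u + c *\<^sub>R S z = z"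
proof -
  have "\<exists>!z\<in>D. (1 - c) *\<^sub>R u + c *\<^sub>R S z = z"
  proof (rule Banach_fix)
    show "complete D" using \<open>closed D\<close> by (simp add: complete_eq_closed)
    show "(\<lambda>z. (1 - c) *\<^sub>R u + c *\<^sub>R S z) ` D \<subseteq> D"
      using assms by (auto intro!: convexD)
    show "dist ((1 - c) *\<^sub>R u + c *\<^sub>R S x) ((1 - c) *\<^sub>R u + c *\<^sub>R S y) \<le> c * dist x y"
      if "x \<in> D" "y \<in> D" for x y
      using lipschitz_on_1_norm_le[OF \<open>1-lipschitz_on D S\<close> that] \<open>0 \<le> c\<close>
      by (simp add: dist_norm scaleR_diff_right[symmetric] mult_left_mono)
  qed (use assms in auto)
  then show ?thesis by blast
qed

lemma anchored_path_exists:
  fixes D :: "'a::{real_normed_vector,complete_space} set"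
  assumes "closed D" "convex D" "S ` D \<subseteq> D" "1-lipschitz_on D S" "u \<in> D"
  obtains zs where "\<And>n. zs n \<in> D" "\<And>n. (real n + 1) *\<^sub>R (zs n - S (zs n)) = u - zs n"
proof -
  have "\<exists>z\<in>D. (real n + 1) *\<^sub>R (z - S z) = u - z" for n
  proof -
    define c where "c = (real n + 1) / (real n + 2)"
    obtain z where "z \<in> D" and z: "(1 - c) *\<^sub>R u + c *\<^sub>R S z = z"
      using anchored_fixed_point_exists[OF assms, of c] by (auto simp: c_def)
    have "(real n + 2) *\<^sub>R z = (real n + 2) *\<^sub>R ((1 - c) *\<^sub>R u + c *\<^sub>R S z)"
      by (simp add: z)
    also have "\<dots> = ((real n + 2) * (1 - c)) *\<^sub>R u + ((real n + 2) * c) *\<^sub>R S z"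
      by (simp add: scaleR_add_right)
    also have "\<dots> = u + (real n + 1) *\<^sub>R S z"
    proof -
      have "(real n + 2) * (1 - c) = 1" "(real n + 2) * c = real n + 1"
        by (simp_all add: c_def field_simps)
      then show ?thesis by simp
    qed
    finally have "(real n + 1) *\<^sub>R (z - S z) = u - z"
      by (simp add: algebra_simps scaleR_2)
    with \<open>z \<in> D\<close> show ?thesis by blast
  qed
  then show ?thesis using that by metis
qed

lemma anchored_point_inner_le:
  fixes S :: "'a::real_inner \<Rightarrow> 'a"
  assumes z: "c *\<^sub>R (z - S z) = u - z" and "0 \<le> c"
    and ne: "norm (S y - S z) \<le> norm (y - z)"
  shows "inner (u - z) (y - z) \<le> c * norm (y - S y) * norm (y - z)"
proof -
  have "inner (u - z) (y - z) = c * inner (z - S z) (y - z)"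
    by (simp flip: z)
  also have "\<dots> \<le> c * inner (y - S y) (y - z)"
    using nonexpansive_imp_monotone[OF ne] \<open>0 \<le> c\<close>
    by (intro mult_left_mono) (simp_all add: inner_diff_left)
  also have "\<dots> \<le> c * (norm (y - S y) * norm (y - z))"
    using \<open>0 \<le> c\<close> by (intro mult_left_mono norm_cauchy_schwarz)
  finally show ?thesis by simp
qed

lemma anchored_point_variational_ineq:
  fixes S :: "'a::real_inner \<Rightarrow> 'a"
  assumes "c *\<^sub>R (z - S z) = u - z" "0 \<le> c" "norm (S q - S z) \<le> norm (q - z)" "S q = q"
  shows "0 \<le> inner (u - z) (z - q)"
  using anchored_point_inner_le[where S = S, OF assms(1-3)] assms(4)
  by (simp add: inner_diff_right)

lemma anchored_points_dist_le:
  fixes S :: "'a::real_inner \<Rightarrow> 'a"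
  assumes y: "c *\<^sub>R (y - S y) = u - y" and z: "d *\<^sub>R (z - S z) = u - z"
    and "0 \<le> c" "c < d" and ne: "norm (S y - S z) \<le> norm (y - z)"
  shows "(norm (z - y))\<^sup>2 \<le> (norm (u - z))\<^sup>2 - (norm (u - y))\<^sup>2"
proof -
  define a b where "a = u - y" and "b = u - z"
  have "0 \<le> c * d * inner ((y - S y) - (z - S z)) (y - z)"
    using nonexpansive_imp_monotone[OF ne] \<open>0 \<le> c\<close> \<open>c < d\<close> by simp
  also have "\<dots> = inner (d *\<^sub>R (c *\<^sub>R (y - S y)) - c *\<^sub>R (d *\<^sub>R (z - S z))) (y - z)"
    by (simp add: inner_diff_left algebra_simps)
  also have "\<dots> = (d - c) * inner a (b - a) - c * (norm (b - a))\<^sup>2"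
    unfolding y z a_def b_def
    by (simp add: inner_diff_left inner_diff_right power2_norm_eq_inner algebra_simps inner_commute)
  finally have "0 \<le> inner a (b - a)"
    using \<open>0 \<le> c\<close> \<open>c < d\<close> by (smt (verit) mult_nonneg_nonneg zero_le_mult_iff zero_le_power2)
  moreover have "(norm b)\<^sup>2 = (norm a)\<^sup>2 + 2 * inner a (b - a) + (norm (b - a))\<^sup>2"
    using power2_norm_add[of a "b - a"] by simp
  ultimately show ?thesis
    by (simp add: a_def b_def norm_minus_commute)
qed

lemma anchored_path_Cauchy:
  fixes D :: "'a::real_inner set" and zs :: "nat \<Rightarrow> 'a"
  assumes ne: "1-lipschitz_on D S"
    and zs: "\<And>n. zs n \<in> D" "\<And>n. (real n + 1) *\<^sub>R (zs n - S (zs n)) = u - zs n"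
    and q0: "q0 \<in> D" "S q0 = q0"
  shows "Cauchy zs"
proof -
  define R where "R n = (norm (u - zs n))\<^sup>2" for n
  have R_mono: "(norm (zs n - zs m))\<^sup>2 \<le> R n - R m" if "m \<le> n" for m n
  proof (cases "m = n")
    case False
    then show ?thesis
      using anchored_points_dist_le[where S = S, OF zs(2)[of m] zs(2)[of n]]
        lipschitz_on_1_norm_le[OF ne zs(1) zs(1)] that
      by (simp add: R_def)
  qed (simp add: R_def)
  have "incseq R"
  proof (rule incseq_SucI)
    fix n
    show "R n \<le> R (Suc n)"
      using R_mono[of n "Suc n"] zero_le_power2[of "norm (zs (Suc n) - zs n)"] by linarith
  qed
  moreover have "bdd_above (range R)"
  proof (rule bdd_aboveI2)
    fix n
    have "0 \<le> inner (u - zs n) (zs n - q0)"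
      using anchored_point_variational_ineq[where S = S, OF zs(2)[of n]] q0
        lipschitz_on_1_norm_le[OF ne q0(1) zs(1)] by simp
    then show "R n \<le> (norm (u - q0))\<^sup>2"
      using power2_norm_add[of "u - zs n" "zs n - q0"] by (simp add: R_def)
  qed
  ultimately have "Cauchy R"
    using LIMSEQ_incseq_SUP convergentI convergent_Cauchy by blast
  show "Cauchy zs"
  proof (rule metric_CauchyI)
    fix e :: real
    assume "0 < e"
    then obtain M where M: "\<And>m n. M \<le> m \<Longrightarrow> M \<le> n \<Longrightarrow> dist (R m) (R n) < e\<^sup>2"
      using metric_CauchyD[OF \<open>Cauchy R\<close>, of "e\<^sup>2"] by auto
    have "dist (zs m) (zs n) < e" if "M \<le> m" "M \<le> n" for m n
    proof -
      have "(dist (zs m) (zs n))\<^sup>2 \<le> \<bar>R n - R m\<bar>"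
        using R_mono[of m n] R_mono[of n m]
        by (cases "m \<le> n") (auto simp: dist_norm norm_minus_commute)
      also have "\<dots> < e\<^sup>2"
        using M[OF that] by (simp add: dist_real_def abs_minus_commute)
      finally show ?thesis using \<open>0 < e\<close> by (simp add: power_less_imp_less_base)
    qed
    then show "\<exists>M. \<forall>m\<ge>M. \<forall>n\<ge>M. dist (zs m) (zs n) < e" by blast
  qed
qed

lemma Browder_convergence:
  fixes D :: "'a::{real_inner,complete_space} set" and zs :: "nat \<Rightarrow> 'a"
  assumes "closed D" and ne: "1-lipschitz_on D S"
    and zs: "\<And>n. zs n \<in> D" "\<And>n. (real n + 1) *\<^sub>R (zs n - S (zs n)) = u - zs n"
    and q0: "q0 \<in> D" "S q0 = q0"
  shows "\<exists>p. zs \<longlonglongrightarrow> p \<and> p \<in> D \<and> S p = p \<and> (\<forall>q\<in>D. S q = q \<longrightarrow> 0 \<le> inner (u - p) (p - q))"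
proof -
  obtain p where p: "zs \<longlonglongrightarrow> p"
    using anchored_path_Cauchy[OF ne zs q0] by (auto simp: Cauchy_convergent_iff convergent_def)
  have "p \<in> D"
    using closed_sequentially[OF \<open>closed D\<close> zs(1) p] .
  have "(\<lambda>n. zs n - S (zs n)) \<longlonglongrightarrow> p - S p"
    using continuous_on_tendsto_compose[OF lipschitz_on_continuous_on[OF ne] p \<open>p \<in> D\<close>] zs(1) p
    by (intro tendsto_diff) auto
  moreover have "(\<lambda>n. zs n - S (zs n)) \<longlonglongrightarrow> 0"
  proof -
    have "(\<lambda>n. inverse (real n + 1) *\<^sub>R (u - zs n)) \<longlonglongrightarrow> 0 *\<^sub>R (u - p)"
      using LIMSEQ_inverse_real_of_nat by (intro tendsto_intros p) (simp add: add.commute)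
    moreover have "inverse (real n + 1) *\<^sub>R (u - zs n) = zs n - S (zs n)" for n
      by (simp flip: zs(2))
    ultimately show ?thesis by simp
  qed
  ultimately have "S p = p"
    using LIMSEQ_unique by fastforce
  moreover have "0 \<le> inner (u - p) (p - q)" if "q \<in> D" "S q = q" for q
  proof (rule LIMSEQ_le_const)
    show "(\<lambda>n. inner (u - zs n) (zs n - q)) \<longlonglongrightarrow> inner (u - p) (p - q)"
      by (intro tendsto_intros p)
    show "\<exists>N. \<forall>n\<ge>N. 0 \<le> inner (u - zs n) (zs n - q)"
      using anchored_point_variational_ineq[where S = S, OF zs(2)] that
        lipschitz_on_1_norm_le[OF ne that(1) zs(1)] by simp
  qed
  ultimately show ?thesis using p \<open>p \<in> D\<close> by blast
qed

section \<open>Halpern's iteration\<close>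

lemma power2_norm_add_le:
  fixes a b :: "'a::real_inner"
  shows "(norm (a + b))\<^sup>2 \<le> (norm a)\<^sup>2 + 2 * inner b (a + b)"
  by (simp add: power2_norm_add inner_add_right inner_commute power2_norm_eq_inner)

lemma inner_anchor_shift_le:
  fixes u p y z :: "'a::real_inner"
  shows "inner (u - p) (y - p) \<le> inner (u - z) (y - z) + norm (z - p) * (norm (u - p) + norm (y - z))"
proof -
  have "inner (u - p) (y - p) - inner (u - z) (y - z) = inner (u - p) (z - p) + inner (z - p) (y - z)"
    by (simp add: inner_diff_left inner_diff_right inner_commute)
  also have "\<dots> \<le> norm (u - p) * norm (z - p) + norm (z - p) * norm (y - z)"
    by (intro add_mono norm_cauchy_schwarz)
  finally show ?thesis by (simp add: algebra_simps)
qed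

locale halpern_iteration =
  fixes D :: "'a::{real_inner,complete_space} set" and S :: "'a \<Rightarrow> 'a"
    and u :: 'a and lam :: "nat \<Rightarrow> real" and x :: "nat \<Rightarrow> 'a"
  assumes closed: "closed D" and convex: "convex D"
    and maps: "S ` D \<subseteq> D" and nonexpansive: "1-lipschitz_on D S"
    and fixed_point_exists: "\<exists>q\<in>D. S q = q"
    and anchor: "u \<in> D" and steering: "steering_seq lam" and start: "x 0 \<in> D"
    and iteration: "\<And>k. x (Suc k) = lam k *\<^sub>R u + (1 - lam k) *\<^sub>R S (x k)"
begin

lemma lam_bounds: "0 \<le> lam k" "lam k \<le> 1"
  using steering by (auto simp: steering_seq_def)

lemma S_norm_le: "y \<in> D \<Longrightarrow> z \<in> D \<Longrightarrow> norm (S y - S z) \<le> norm (y - z)"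
  by (rule lipschitz_on_1_norm_le[OF nonexpansive])

lemma iterate_in_D: "x k \<in> D"
proof (induction k)
  case (Suc k)
  then have "S (x k) \<in> D" using maps by auto
  then show ?case
    unfolding iteration using lam_bounds[of k] by (intro convexD[OF convex anchor]) auto
qed (rule start)

lemma iterates_bounded:
  obtains B where "\<And>k. norm (x k) \<le> B" "\<And>k. norm (S (x k)) \<le> B"
proof -
  obtain q where "q \<in> D" "S q = q" using fixed_point_exists by blast
  define r where "r = max (norm (u - q)) (norm (x 0 - q))"
  have S_dist: "norm (S (x k) - q) \<le> norm (x k - q)" for k
    using S_norm_le[OF iterate_in_D \<open>q \<in> D\<close>] \<open>S q = q\<close> by simp
  have dist: "norm (x k - q) \<le> r" for k
  proof (induction k)
    case (Suc k)
    have "x (Suc k) - q = lam k *\<^sub>R (u - q) + (1 - lam k) *\<^sub>R (S (x k) - q)"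
      by (simp add: iteration algebra_simps)
    also have "norm \<dots> \<le> lam k * norm (u - q) + (1 - lam k) * norm (S (x k) - q)"
      using lam_bounds[of k] by (auto intro: norm_triangle_le)
    also have "\<dots> \<le> lam k * r + (1 - lam k) * r"
      using lam_bounds[of k] S_dist[of k] Suc by (intro add_mono mult_left_mono) (auto simp: r_def)
    finally show ?case by (simp add: algebra_simps)
  qed (simp add: r_def)
  show ?thesis
  proof (rule that[of "norm q + r"])
    show "norm (x k) \<le> norm q + r" "norm (S (x k)) \<le> norm q + r" for k
      using norm_triangle_ineq2[of "x k" q] norm_triangle_ineq2[of "S (x k)" q] dist[of k] S_dist[of k]
      by linarith+
  qed
qed

lemma asymptotically_regular: "(\<lambda>k. norm (x (Suc k) - x k)) \<longlonglongrightarrow> 0"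
proof -
  obtain B where B: "\<And>k. norm (S (x k)) \<le> B" using iterates_bounded by metis
  define M where "M = norm u + B"
  have "0 \<le> M" using B[of 0] by (simp add: M_def add_nonneg_nonneg order_trans[OF norm_ge_zero])
  have M: "norm (u - S (x k)) \<le> M" for k
    using norm_triangle_ineq4[of u "S (x k)"] B[of k] by (simp add: M_def)
  let ?a = "\<lambda>k. norm (x (Suc k) - x k)" and ?d = "\<lambda>k. \<bar>lam (Suc k) - lam k\<bar>"
  show ?thesis
  proof (rule recursive_ineq_LIMSEQ_zero[where \<gamma> = "\<lambda>k. lam (Suc k)" and \<beta> = "\<lambda>_. 0"
        and b = "\<lambda>k. M * ?d k"])
    fix k
    have "x (Suc (Suc k)) - x (Suc k)
        = (lam (Suc k) - lam k) *\<^sub>R (u - S (x k)) + (1 - lam (Suc k)) *\<^sub>R (S (x (Suc k)) - S (x k))"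
      by (simp add: iteration[of "Suc k"] iteration[of k] algebra_simps)
    also have "norm \<dots> \<le> ?d k * norm (u - S (x k)) + (1 - lam (Suc k)) * norm (S (x (Suc k)) - S (x k))"
      using lam_bounds[of "Suc k"] by (auto intro: norm_triangle_le)
    also have "\<dots> \<le> ?d k * M + (1 - lam (Suc k)) * ?a k"
      using lam_bounds[of "Suc k"] M[of k] S_norm_le[OF iterate_in_D iterate_in_D]
      by (intro add_mono mult_left_mono) auto
    finally show "?a (Suc k) \<le> (1 - lam (Suc k)) * ?a k + lam (Suc k) * 0 + M * ?d k"
      by (simp add: algebra_simps)
  next
    show "\<not> summable (\<lambda>k. lam (Suc k))"
      using steering by (simp add: steering_seq_def summable_Suc_iff)
    show "summable (\<lambda>k. M * ?d k)"
      using steering by (intro summable_mult) (simp add: steering_seq_def)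
  qed (use lam_bounds \<open>0 \<le> M\<close> in auto)
qed

lemma residual_LIMSEQ_zero: "(\<lambda>k. norm (x k - S (x k))) \<longlonglongrightarrow> 0"
proof -
  obtain B where B: "\<And>k. norm (S (x k)) \<le> B" using iterates_bounded by metis
  have bound: "norm (x k - S (x k)) \<le> norm (x (Suc k) - x k) + lam k * (norm u + B)" for k
  proof -
    have "x k - S (x k) = (x k - x (Suc k)) + lam k *\<^sub>R (u - S (x k))"
      by (simp add: iteration algebra_simps)
    also have "norm \<dots> \<le> norm (x (Suc k) - x k) + lam k * norm (u - S (x k))"
      using lam_bounds[of k] by (auto intro: norm_triangle_le simp: norm_minus_commute)
    also have "\<dots> \<le> norm (x (Suc k) - x k) + lam k * (norm u + B)"
      using lam_bounds[of k] B[of k] norm_triangle_ineq4[of u "S (x k)"]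
      by (intro add_left_mono mult_left_mono) auto
    finally show ?thesis .
  qed
  have "lam \<longlonglongrightarrow> 0" using steering by (simp add: steering_seq_def)
  then have "(\<lambda>k. norm (x (Suc k) - x k) + lam k * (norm u + B)) \<longlonglongrightarrow> 0"
    using tendsto_add[OF asymptotically_regular tendsto_mult_left_zero] by simp
  then show ?thesis
    by (rule Lim_null_comparison[rotated]) (simp add: bound)
qed

text \<open>The bound on \<open>\<langle>u - z\<^sub>n, x\<^sub>k - z\<^sub>n\<rangle>\<close> from monotonicity of \<open>I - S\<close> replaces the usual
  weak-compactness and demiclosedness argument.\<close>

lemma eventually_inner_Browder_limit_le:
  assumes zs: "\<And>n. zs n \<in> D" "\<And>n. (real n + 1) *\<^sub>R (zs n - S (zs n)) = u - zs n"
    and "zs \<longlonglongrightarrow> p" and "\<epsilon> > 0"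
  shows "\<forall>\<^sub>F k in sequentially. inner (u - p) (x k - p) \<le> \<epsilon>"
proof -
  obtain B where B: "\<And>k. norm (x k) \<le> B" using iterates_bounded by metis
  obtain B' where B': "\<And>n. norm (zs n) \<le> B'"
    using convergent_imp_Bseq[OF convergentI[OF \<open>zs \<longlonglongrightarrow> p\<close>]] by (metis BseqE)
  define K where "K = B + B'"
  have K: "norm (x k - zs n) \<le> K" for k n
    using norm_triangle_ineq4[of "x k" "zs n"] B[of k] B'[of n] by (simp add: K_def)
  have "(\<lambda>n. norm (zs n - p) * (norm (u - p) + K)) \<longlonglongrightarrow> 0"
    using \<open>zs \<longlonglongrightarrow> p\<close> by (intro tendsto_mult_left_zero tendsto_norm_zero) (simp add: LIM_zero)
  from order_tendstoD(2)[OF this, of "\<epsilon> / 2"] \<open>\<epsilon> > 0\<close>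
  obtain n where n: "norm (zs n - p) * (norm (u - p) + K) < \<epsilon> / 2"
    by (auto dest: eventually_happens)
  have "(\<lambda>k. (real n + 1) * norm (x k - S (x k)) * K) \<longlonglongrightarrow> 0"
    by (intro tendsto_mult_left_zero tendsto_mult_right_zero residual_LIMSEQ_zero)
  from order_tendstoD(2)[OF this, of "\<epsilon> / 2"] \<open>\<epsilon> > 0\<close>
  have "\<forall>\<^sub>F k in sequentially. (real n + 1) * norm (x k - S (x k)) * K < \<epsilon> / 2" by simp
  then show ?thesis
  proof (rule eventually_mono)
    fix k
    assume small: "(real n + 1) * norm (x k - S (x k)) * K < \<epsilon> / 2"
    have "inner (u - zs n) (x k - zs n) \<le> (real n + 1) * norm (x k - S (x k)) * norm (x k - zs n)"
      using S_norm_le[OF iterate_in_D zs(1)] by (intro anchored_point_inner_le[where S = S, OF zs(2)[of n]]) auto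
    also have "\<dots> \<le> (real n + 1) * norm (x k - S (x k)) * K"
      using K by (intro mult_left_mono) auto
    finally have "inner (u - zs n) (x k - zs n) < \<epsilon> / 2" using small by linarith
    moreover have "norm (zs n - p) * (norm (u - p) + norm (x k - zs n)) \<le> norm (zs n - p) * (norm (u - p) + K)"
      using K by (intro mult_left_mono add_left_mono) auto
    ultimately show "inner (u - p) (x k - p) \<le> \<epsilon>"
      using inner_anchor_shift_le[of u p "x k" "zs n"] n by linarith
  qed
qed

theorem Halpern_convergence:
  "\<exists>p. x \<longlonglongrightarrow> p \<and> p \<in> D \<and> S p = p \<and> (\<forall>q\<in>D. S q = q \<longrightarrow> 0 \<le> inner (u - p) (p - q))"
proof -
  obtain zs where zs: "\<And>n. zs n \<in> D" "\<And>n. (real n + 1) *\<^sub>R (zs n - S (zs n)) = u - zs n"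
    using anchored_path_exists[OF closed convex maps nonexpansive anchor] by blast
  obtain q where "q \<in> D" "S q = q" using fixed_point_exists by blast
  then obtain p where "zs \<longlonglongrightarrow> p" "p \<in> D" "S p = p"
    and variational: "\<forall>q\<in>D. S q = q \<longrightarrow> 0 \<le> inner (u - p) (p - q)"
    using Browder_convergence[OF closed nonexpansive zs] by blast
  let ?A = "\<lambda>k. (norm (x k - p))\<^sup>2"
  have "?A \<longlonglongrightarrow> 0"
  proof (rule recursive_ineq_LIMSEQ_zero[where \<gamma> = lam and b = "\<lambda>_. 0"
        and \<beta> = "\<lambda>k. 2 * inner (u - p) (x (Suc k) - p)"])
    fix k
    have "x (Suc k) - p = (1 - lam k) *\<^sub>R (S (x k) - S p) + lam k *\<^sub>R (u - p)"
      using \<open>S p = p\<close> by (simp add: iteration algebra_simps)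
    then have "?A (Suc k) \<le> (1 - lam k)\<^sup>2 * (norm (S (x k) - S p))\<^sup>2 + lam k * (2 * inner (u - p) (x (Suc k) - p))"
      using power2_norm_add_le[of "(1 - lam k) *\<^sub>R (S (x k) - S p)" "lam k *\<^sub>R (u - p)"] lam_bounds[of k]
      by (simp add: power_mult_distrib)
    moreover have "(1 - lam k)\<^sup>2 * (norm (S (x k) - S p))\<^sup>2 \<le> (1 - lam k) * ?A k"
      using lam_bounds[of k] S_norm_le[OF iterate_in_D \<open>p \<in> D\<close>, of k]
      by (intro mult_mono power_mono) (auto simp: power2_eq_square mult_left_le_one_le)
    ultimately show "?A (Suc k) \<le> (1 - lam k) * ?A k + lam k * (2 * inner (u - p) (x (Suc k) - p)) + 0"
      by simp
  next
    show "\<forall>\<^sub>F k in sequentially. 2 * inner (u - p) (x (Suc k) - p) \<le> \<epsilon>" if "\<epsilon> > 0" for \<epsilon>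
      using eventually_inner_Browder_limit_le[OF zs \<open>zs \<longlonglongrightarrow> p\<close>, of "\<epsilon> / 2"] that
        eventually_sequentially_Suc[of "\<lambda>k. 2 * inner (u - p) (x k - p) \<le> \<epsilon>"]
      by (simp add: mult.commute)
  qed (use lam_bounds steering in \<open>auto simp: steering_seq_def\<close>)
  then have "x \<longlonglongrightarrow> p"
    using tendsto_real_sqrt[of ?A 0] by (simp add: tendsto_norm_zero_iff LIM_zero_iff)
  with \<open>p \<in> D\<close> \<open>S p = p\<close> variational show ?thesis by blast
qed

end

section \<open>String averaging of firmly nonexpansive operators\<close>

lemma summable_on_norm_le:
  fixes f :: "'b \<Rightarrow> 'a::{real_normed_vector,complete_space}"
  assumes "g summable_on A" and bound: "\<And>t. t \<in> A \<Longrightarrow> norm (f t) \<le> g t"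
  shows "f summable_on A"
proof -
  obtain G where G: "(sum g \<longlongrightarrow> G) (finite_subsets_at_top A)"
    using \<open>g summable_on A\<close> by (auto simp: summable_on_def has_sum_def)
  have "cauchy_filter (filtermap (sum f) (finite_subsets_at_top A))"
    unfolding cauchy_filter_metric_filtermap
  proof (intro allI impI)
    fix e :: real
    assume "0 < e"
    then have "\<forall>\<^sub>F F in finite_subsets_at_top A. dist (sum g F) G < e / 4"
      by (intro tendstoD[OF G]) simp
    then obtain F0 where F0: "finite F0" "F0 \<subseteq> A"
      and close: "\<And>F. finite F \<Longrightarrow> F0 \<subseteq> F \<Longrightarrow> F \<subseteq> A \<Longrightarrow> dist (sum g F) G < e / 4"
      unfolding eventually_finite_subsets_at_top by meson
    define P where "P F \<longleftrightarrow> finite F \<and> F0 \<subseteq> F \<and> F \<subseteq> A" for F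
    have tail: "norm (sum f F - sum f F0) < e / 2" if "P F" for F
    proof -
      have "dist (sum g F) G < e / 4" "dist (sum g F0) G < e / 4"
        using that F0 close by (auto simp: P_def)
      then have "sum g F - sum g F0 < e / 2"
        unfolding dist_real_def by arith
      moreover have "norm (sum f (F - F0)) \<le> sum g (F - F0)"
        using that bound by (intro sum_norm_le) (auto simp: P_def)
      ultimately show ?thesis
        using that by (simp add: P_def sum_diff)
    qed
    have "dist (sum f F1) (sum f F2) < e" if "P F1" "P F2" for F1 F2
    proof -
      have "dist (sum f F1) (sum f F2) \<le> norm (sum f F1 - sum f F0) + norm (sum f F2 - sum f F0)"
        using norm_triangle_ineq4[of "sum f F1 - sum f F0" "sum f F2 - sum f F0"] by (simp add: dist_norm)
      then show ?thesis using tail[OF that(1)] tail[OF that(2)] by linarith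
    qed
    moreover have "eventually P (finite_subsets_at_top A)"
      unfolding eventually_finite_subsets_at_top P_def using F0 by blast
    ultimately show "\<exists>P. eventually P (finite_subsets_at_top A) \<and>
        (\<forall>F1 F2. P F1 \<and> P F2 \<longrightarrow> dist (sum f F1) (sum f F2) < e)" by blast
  qed
  then obtain L where "filtermap (sum f) (finite_subsets_at_top A) \<le> nhds L"
    using cauchy_filter_convergent convergent_filter_iff by blast
  then show ?thesis
    unfolding summable_on_def has_sum_def filterlim_def by blast
qed

lemma firmly_nonexpansive_on_norm_le:
  assumes "firmly_nonexpansive_on D T" "x \<in> D" "y \<in> D"
  shows "norm (T x - T y) \<le> norm (x - y)"
proof -
  have "(norm (T x - T y))\<^sup>2 \<le> inner (x - y) (T x - T y)"
    using assms unfolding firmly_nonexpansive_on_def by blast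
  also have "\<dots> \<le> norm (x - y) * norm (T x - T y)"
    by (rule norm_cauchy_schwarz)
  finally show ?thesis
    by (cases "T x = T y") (auto simp: power2_eq_square)
qed

lemma firmly_nonexpansive_on_fixed_point_ineq:
  assumes "firmly_nonexpansive_on D T" "x \<in> D" "q \<in> D" "T q = q"
  shows "(norm (T x - x))\<^sup>2 \<le> (norm (x - q))\<^sup>2 - (norm (T x - q))\<^sup>2"
proof -
  have "(norm (T x - q))\<^sup>2 \<le> inner (T x - q) (x - q)"
    using assms unfolding firmly_nonexpansive_on_def by (metis inner_commute)
  moreover have "(norm (T x - x))\<^sup>2 = (norm (T x - q))\<^sup>2 - 2 * inner (T x - q) (x - q) + (norm (x - q))\<^sup>2"
    using power2_norm_add[of "T x - q" "q - x"] by (simp add: inner_diff_right algebra_simps norm_minus_commute)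
  ultimately show ?thesis by linarith
qed

locale firmly_nonexpansive_family =
  fixes D :: "'a::real_inner set" and I :: "nat set" and T :: "nat \<Rightarrow> 'a \<Rightarrow> 'a"
  assumes maps: "\<And>i. i \<in> I \<Longrightarrow> T i ` D \<subseteq> D"
    and firm: "\<And>i. i \<in> I \<Longrightarrow> firmly_nonexpansive_on D (T i)"
begin

lemma string_op_in_D: "set t \<subseteq> I \<Longrightarrow> x \<in> D \<Longrightarrow> string_op T t x \<in> D"
  unfolding string_op_def
proof (induction t arbitrary: x)
  case (Cons i t)
  then show ?case using maps[of i] by auto
qed simp

lemma string_op_norm_le:
  "set t \<subseteq> I \<Longrightarrow> x \<in> D \<Longrightarrow> y \<in> D \<Longrightarrow> norm (string_op T t x - string_op T t y) \<le> norm (x - y)"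
  unfolding string_op_def
proof (induction t arbitrary: x y)
  case (Cons i t)
  then have "T i x \<in> D" "T i y \<in> D" using maps[of i] by auto
  with Cons have "norm (fold T t (T i x) - fold T t (T i y)) \<le> norm (T i x - T i y)" by simp
  also have "\<dots> \<le> norm (x - y)" using Cons.prems firmly_nonexpansive_on_norm_le[OF firm] by simp
  finally show ?case by simp
qed simp

lemma string_op_common_fixed_point:
  "set t \<subseteq> I \<Longrightarrow> (\<And>i. i \<in> I \<Longrightarrow> T i q = q) \<Longrightarrow> string_op T t q = q"
  unfolding string_op_def by (induction t) auto

text \<open>Every factor is nonexpansive towards \<open>q\<close>, so equal distances at both ends force equality
  at each factor, where the fixed-point inequality of a firmly nonexpansive map gives \<open>T i x = x\<close>.\<close>

lemma string_op_fixes_components: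
  assumes "set t \<subseteq> I" "q \<in> D" "\<And>i. i \<in> I \<Longrightarrow> T i q = q" "x \<in> D"
    and "norm (x - q) \<le> norm (string_op T t x - q)"
  shows "\<forall>i\<in>set t. T i x = x"
  using assms unfolding string_op_def
proof (induction t arbitrary: x)
  case (Cons i t)
  have "i \<in> I" "set t \<subseteq> I" "T i x \<in> D" using Cons.prems maps by auto
  have "norm (fold T t (T i x) - q) \<le> norm (T i x - q)"
    using string_op_norm_le[OF \<open>set t \<subseteq> I\<close> \<open>T i x \<in> D\<close> \<open>q \<in> D\<close>]
      string_op_common_fixed_point[OF \<open>set t \<subseteq> I\<close> Cons.prems(3)]
    by (simp add: string_op_def)
  moreover have "norm (T i x - q) \<le> norm (x - q)"
    using firmly_nonexpansive_on_norm_le[OF firm[OF \<open>i \<in> I\<close>] \<open>x \<in> D\<close> \<open>q \<in> D\<close>] Cons.prems(3)[OF \<open>i \<in> I\<close>]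
    by simp
  ultimately have "norm (T i x - q) = norm (x - q)"
    using Cons.prems(5) by simp
  then have "T i x = x"
    using firmly_nonexpansive_on_fixed_point_ineq[OF firm[OF \<open>i \<in> I\<close>] \<open>x \<in> D\<close> \<open>q \<in> D\<close> Cons.prems(3)[OF \<open>i \<in> I\<close>]]
    by simp
  with Cons show ?case by simp
qed simp

end

lemma has_sum_convex_combination_in:
  fixes f :: "'b \<Rightarrow> 'a::real_normed_vector"
  assumes "closed C" "convex C" "(w has_sum 1) A" "\<And>t. t \<in> A \<Longrightarrow> 0 \<le> w t"
    and "\<And>t. t \<in> A \<Longrightarrow> f t \<in> C" and s: "((\<lambda>t. w t *\<^sub>R f t) has_sum s) A"
  shows "s \<in> C"
proof -
  have w: "(sum w \<longlongrightarrow> 1) (finite_subsets_at_top A)"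
    using \<open>(w has_sum 1) A\<close> unfolding has_sum_def .
  have "((\<lambda>F. (1 / sum w F) *\<^sub>R (\<Sum>t\<in>F. w t *\<^sub>R f t)) \<longlongrightarrow> (1 / 1) *\<^sub>R s) (finite_subsets_at_top A)"
    using s unfolding has_sum_def by (intro tendsto_intros w) simp
  moreover have "\<forall>\<^sub>F F in finite_subsets_at_top A. (1 / sum w F) *\<^sub>R (\<Sum>t\<in>F. w t *\<^sub>R f t) \<in> C"
  proof (rule eventually_mono[OF eventually_conj[OF order_tendstoD(1)[OF w zero_less_one]
          eventually_finite_subsets_at_top_weakI]])
    fix F
    assume F: "0 < sum w F \<and> finite F \<and> F \<subseteq> A"
    have "(1 / sum w F) *\<^sub>R (\<Sum>t\<in>F. w t *\<^sub>R f t) = (\<Sum>t\<in>F. (w t / sum w F) *\<^sub>R f t)"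
      by (simp add: scaleR_sum_right)
    also have "\<dots> \<in> C"
      using F assms(4,5) \<open>convex C\<close>
      by (intro convex_sum) (auto simp: sum_divide_distrib[symmetric])
    finally show "(1 / sum w F) *\<^sub>R (\<Sum>t\<in>F. w t *\<^sub>R f t) \<in> C" .
  qed auto
  ultimately show ?thesis
    using Lim_in_closed_set[OF \<open>closed C\<close> _ finite_subsets_at_top_neq_bot] by force
qed

text \<open>Each \<open>\<langle>v t, c\<rangle> \<le> \<parallel>c\<parallel>\<^sup>2\<close> while their weighted average is \<open>\<parallel>c\<parallel>\<^sup>2\<close>, so equality holds
  termwise.\<close>

lemma has_sum_weighted_norm_le_imp_eq:
  fixes v :: "'b \<Rightarrow> 'a::real_inner"
  assumes w: "(w has_sum 1) A" "\<And>t. t \<in> A \<Longrightarrow> 0 < w t"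
    and c: "((\<lambda>t. w t *\<^sub>R v t) has_sum c) A" and le: "\<And>t. t \<in> A \<Longrightarrow> norm (v t) \<le> norm c"
    and "t \<in> A"
  shows "v t = c"
proof -
  define g where "g t = w t * inner c c + - inner (w t *\<^sub>R v t) c" for t
  have "(g has_sum (1 * inner c c + - inner c c)) A"
    unfolding g_def
    by (intro has_sum_add has_sum_cmult_left w(1) has_sum_uminusI
        has_sum_bounded_linear[OF bounded_linear_inner_left c])
  moreover have "0 \<le> g t" if "t \<in> A" for t
  proof -
    have "inner (v t) c \<le> norm (v t) * norm c" by (rule norm_cauchy_schwarz)
    also have "\<dots> \<le> inner c c" using le[OF that] by (simp add: mult_right_mono dot_square_norm power2_eq_square)
    finally show ?thesis using w(2)[OF that] by (simp add: g_def)
  qed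
  ultimately have "g t = 0"
    using nonneg_has_sum_le_0D[of g A 0 t] \<open>t \<in> A\<close> by simp
  then have "inner (v t) c = inner c c" using w(2)[OF \<open>t \<in> A\<close>] by (simp add: g_def)
  then have "(norm (v t - c))\<^sup>2 \<le> 0"
    using le[OF \<open>t \<in> A\<close>] power_mono[OF le[OF \<open>t \<in> A\<close>], of 2]
    by (simp add: power2_norm_eq_inner inner_diff_left inner_diff_right inner_commute)
  then show ?thesis by simp
qed

lemma metric_proj_eqI:
  fixes F :: "'a::real_inner set"
  assumes "p \<in> F" and variational: "\<And>q. q \<in> F \<Longrightarrow> 0 \<le> inner (u - p) (p - q)"
  shows "metric_proj F u = p"
proof -
  have pythagoras: "(norm (u - p))\<^sup>2 + (norm (p - q))\<^sup>2 \<le> (norm (u - q))\<^sup>2" if "q \<in> F" for q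
    using power2_norm_add[of "u - p" "p - q"] variational[OF that] by simp
  show ?thesis
    unfolding metric_proj_def
  proof (rule the_equality)
    have "norm (u - p) \<le> norm (u - q)" if "q \<in> F" for q
    proof (rule power2_le_imp_le)
      show "(norm (u - p))\<^sup>2 \<le> (norm (u - q))\<^sup>2"
        using pythagoras[OF that] zero_le_power2[of "norm (p - q)"] by linarith
    qed simp
    with \<open>p \<in> F\<close> show "p \<in> F \<and> (\<forall>q\<in>F. norm (u - p) \<le> norm (u - q))" by blast
  next
    fix p'
    assume "p' \<in> F \<and> (\<forall>q\<in>F. norm (u - p') \<le> norm (u - q))"
    then have "p' \<in> F" "norm (u - p') \<le> norm (u - p)"
      using \<open>p \<in> F\<close> by auto
    then have "(norm (u - p'))\<^sup>2 \<le> (norm (u - p))\<^sup>2"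
      by (simp add: power_mono)
    then have "(norm (p - p'))\<^sup>2 \<le> 0"
      using pythagoras[OF \<open>p' \<in> F\<close>] by linarith
    then show "p' = p" by simp
  qed
qed

locale string_averaging = firmly_nonexpansive_family D I T
  for D :: "'a::{real_inner,complete_space} set" and I T +
  fixes \<Omega> :: "nat list set" and w :: "nat list \<Rightarrow> real" and q0 :: 'a
  assumes closed: "closed D" and convex: "convex D" and weights: "M_infty I \<Omega> w"
    and common_fixed_point_mem: "q0 \<in> (\<Inter>i\<in>I. Fix_on D (T i))"
begin

lemma fit: "fit I \<Omega>" and weights_pos: "\<And>t. t \<in> \<Omega> \<Longrightarrow> 0 < w t" and weights_sum: "(w has_sum 1) \<Omega>"
  using weights by (auto simp: M_infty_def)

lemma index_set_nonempty: "I \<noteq> {}"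
proof -
  have "\<Omega> \<noteq> {}"
    using has_sum_unique[OF weights_sum] has_sum_empty by fastforce
  with fit show ?thesis by (auto simp: fit_def neq_Nil_conv)
qed

lemma common_fixed_point: "q0 \<in> D" "\<And>i. i \<in> I \<Longrightarrow> T i q0 = q0"
  using common_fixed_point_mem index_set_nonempty by (auto simp: Fix_on_def)

definition averaged_op :: "'a \<Rightarrow> 'a" where
  "averaged_op x = (\<Sum>\<^sub>\<infinity>t\<in>\<Omega>. w t *\<^sub>R string_op T t x)"

lemma index_vector_in_I: "t \<in> \<Omega> \<Longrightarrow> set t \<subseteq> I"
  using fit by (auto simp: fit_def)

lemma has_sum_weights_scaleR: "((\<lambda>t. w t *\<^sub>R y) has_sum y) \<Omega>" for y :: 'a
  using has_sum_bounded_linear[OF bounded_linear_scaleR_left weights_sum, of y] by simp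

lemma string_op_summable:
  assumes "x \<in> D"
  shows "(\<lambda>t. w t *\<^sub>R string_op T t x) summable_on \<Omega>"
proof (rule summable_on_norm_le)
  show "(\<lambda>t. w t * (norm q0 + norm (x - q0))) summable_on \<Omega>"
    using has_sum_cmult_left[OF weights_sum] by (auto simp: summable_on_def)
  fix t
  assume "t \<in> \<Omega>"
  have "norm (string_op T t x - q0) \<le> norm (x - q0)"
    using string_op_norm_le[OF index_vector_in_I[OF \<open>t \<in> \<Omega>\<close>] \<open>x \<in> D\<close> common_fixed_point(1)]
      string_op_common_fixed_point[OF index_vector_in_I[OF \<open>t \<in> \<Omega>\<close>] common_fixed_point(2)]
    by simp
  then have "norm (string_op T t x) \<le> norm q0 + norm (x - q0)"
    using norm_triangle_ineq2[of "string_op T t x" q0] by linarith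
  then show "norm (w t *\<^sub>R string_op T t x) \<le> w t * (norm q0 + norm (x - q0))"
    using weights_pos[OF \<open>t \<in> \<Omega>\<close>] by (simp add: mult_left_mono)
qed

lemma has_sum_averaged_op:
  "x \<in> D \<Longrightarrow> ((\<lambda>t. w t *\<^sub>R string_op T t x) has_sum averaged_op x) \<Omega>"
  unfolding averaged_op_def by (rule has_sum_infsum[OF string_op_summable])

lemma averaged_op_in_D: "x \<in> D \<Longrightarrow> averaged_op x \<in> D"
  by (rule has_sum_convex_combination_in[OF closed convex weights_sum _ _ has_sum_averaged_op])
    (auto intro: less_imp_le weights_pos string_op_in_D[OF index_vector_in_I])

lemma averaged_op_nonexpansive: "1-lipschitz_on D averaged_op"
proof (rule lipschitz_onI)
  fix x y
  assume "x \<in> D" "y \<in> D"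
  have "((\<lambda>t. w t *\<^sub>R string_op T t x + - (w t *\<^sub>R string_op T t y)) has_sum
      (averaged_op x + - averaged_op y)) \<Omega>"
    using \<open>x \<in> D\<close> \<open>y \<in> D\<close> by (intro has_sum_add has_sum_averaged_op) (simp_all add: has_sum_uminus has_sum_averaged_op)
  moreover have "norm (w t *\<^sub>R string_op T t x + - (w t *\<^sub>R string_op T t y)) \<le> w t * norm (x - y)"
    if "t \<in> \<Omega>" for t
    using string_op_norm_le[OF index_vector_in_I[OF that] \<open>x \<in> D\<close> \<open>y \<in> D\<close>] weights_pos[OF that]
    by (simp add: scaleR_diff_right[symmetric] mult_left_mono)
  ultimately have "norm (averaged_op x - averaged_op y) \<le> 1 * norm (x - y)"
    using norm_infsum_le has_sum_cmult_left[OF weights_sum] by fastforce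
  then show "dist (averaged_op x) (averaged_op y) \<le> 1 * dist x y"
    by (simp add: dist_norm)
qed simp

lemma averaged_op_fixed_iff:
  assumes "x \<in> D"
  shows "averaged_op x = x \<longleftrightarrow> (\<forall>i\<in>I. T i x = x)"
proof
  assume "averaged_op x = x"
  have "string_op T t x - q0 = x - q0" if "t \<in> \<Omega>" for t
  proof (rule has_sum_weighted_norm_le_imp_eq[OF weights_sum weights_pos _ _ that])
    show "((\<lambda>t. w t *\<^sub>R (string_op T t x - q0)) has_sum (x - q0)) \<Omega>"
      using has_sum_add[OF has_sum_averaged_op[OF \<open>x \<in> D\<close>] has_sum_weights_scaleR[of "- q0"]]
        \<open>averaged_op x = x\<close>
      by (simp add: scaleR_diff_right)
    show "norm (string_op T t x - q0) \<le> norm (x - q0)" if "t \<in> \<Omega>" for t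
      using string_op_norm_le[OF index_vector_in_I[OF that] \<open>x \<in> D\<close> common_fixed_point(1)]
        string_op_common_fixed_point[OF index_vector_in_I[OF that] common_fixed_point(2)]
      by simp
  qed simp
  then have "\<forall>i\<in>set t. T i x = x" if "t \<in> \<Omega>" for t
    using that by (intro string_op_fixes_components[OF index_vector_in_I common_fixed_point \<open>x \<in> D\<close>]) auto
  then show "\<forall>i\<in>I. T i x = x"
    using fit by (auto simp: fit_def)
next
  assume "\<forall>i\<in>I. T i x = x"
  then have "w t *\<^sub>R string_op T t x = w t *\<^sub>R x" if "t \<in> \<Omega>" for t
    using string_op_common_fixed_point[OF index_vector_in_I[OF that]] by simp
  then have "((\<lambda>t. w t *\<^sub>R string_op T t x) has_sum x) \<Omega>"
    by (rule has_sum_cong[THEN iffD2, OF _ has_sum_weights_scaleR])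
  then show "averaged_op x = x"
    unfolding averaged_op_def by (rule infsumI)
qed

lemma common_fixed_points_eq: "(\<Inter>i\<in>I. Fix_on D (T i)) = {q \<in> D. averaged_op q = q}"
  using index_set_nonempty averaged_op_fixed_iff by (auto simp: Fix_on_def)

end

theorem theorem8:
  fixes D :: "'a::{real_inner, complete_space} set"
    and I :: "nat set"
    and T :: "nat \<Rightarrow> 'a \<Rightarrow> 'a"
    and \<Omega> :: "nat list set"
    and w :: "nat list \<Rightarrow> real"
    and lam :: "nat \<Rightarrow> real"
    and u x0 :: 'a
    and x :: "nat \<Rightarrow> 'a"
  assumes "D \<noteq> {}" and "closed D" and "convex D"
    and "I \<subseteq> {0<..}"
    and "\<And>i. i \<in> I \<Longrightarrow> T i ` D \<subseteq> D"
    and "\<And>i. i \<in> I \<Longrightarrow> firmly_nonexpansive_on D (T i)"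
    and "(\<Inter>i\<in>I. Fix_on D (T i)) \<noteq> {}"
    and "M_infty I \<Omega> w"
    and "steering_seq lam"
    and "u \<in> D" and "x0 \<in> D"
    and "x 0 = x0"
    and "\<And>k. x (Suc k) = lam k *\<^sub>R u
            + (1 - lam k) *\<^sub>R (\<Sum>\<^sub>\<infinity>t\<in>\<Omega>. w t *\<^sub>R string_op T t (x k))"
  shows "(\<forall>k. x k \<in> D \<and> (\<lambda>t. w t *\<^sub>R string_op T t (x k)) summable_on \<Omega>)
         \<and> x \<longlonglongrightarrow> metric_proj (\<Inter>i\<in>I. Fix_on D (T i)) u"
proof -
  let ?F = "\<Inter>i\<in>I. Fix_on D (T i)"
  obtain q0 where "q0 \<in> ?F" using assms(7) by blast
  interpret sa: string_averaging D I T \<Omega> w q0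
    using assms(2,3,5,6,8) \<open>q0 \<in> ?F\<close> by unfold_locales
  interpret halpern: halpern_iteration D sa.averaged_op u lam x
  proof
    show "\<exists>q\<in>D. sa.averaged_op q = q"
      using \<open>q0 \<in> ?F\<close> sa.common_fixed_points_eq by blast
    show "x (Suc k) = lam k *\<^sub>R u + (1 - lam k) *\<^sub>R sa.averaged_op (x k)" for k
      using assms(13) by (simp add: sa.averaged_op_def)
    show "sa.averaged_op ` D \<subseteq> D" using sa.averaged_op_in_D by blast
    show "x 0 \<in> D" using assms(11,12) by simp
  qed (fact assms sa.averaged_op_nonexpansive)+
  obtain p where "x \<longlonglongrightarrow> p" "p \<in> D" "sa.averaged_op p = p"
    and variational: "\<forall>q\<in>D. sa.averaged_op q = q \<longrightarrow> 0 \<le> inner (u - p) (p - q)"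
    using halpern.Halpern_convergence by blast
  then have "metric_proj ?F u = p"
    unfolding sa.common_fixed_points_eq by (intro metric_proj_eqI) auto
  then show ?thesis
    using halpern.iterate_in_D sa.string_op_summable[OF halpern.iterate_in_D] \<open>x \<longlonglongrightarrow> p\<close> by simp
qed

end
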